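(* There are two primitive embeddings of the lattice $A_5\oplus A_1$ into the root lattice $D_8$ that are not isomorphic up to the Weyl group $W(D_8)$, i.e. no element of $W(D_8)$ maps the image of one onto the image of the other. Explicitly, identifying $D_8(-1)$ with $\{v\in\mathbb Z^8:\sum v_i\text{ even}\}$ with standard basis $\varepsilon_1,\dots,\varepsilon_8$, and taking the basis $d_8=\varepsilon_1+\varepsilon_2$, $d_{9-i}=-\varepsilon_{i-1}+\varepsilon_i$ ($2\le i\le 8$), the two embeddings have images $\langle d_7,d_6,d_5,d_4,d_3\rangle\oplus\langle \varepsilon_7+\varepsilon_8\rangle$ and $\langle d_7,d_6,d_5,d_4,d_3\rangle\oplus\langle d_1\rangle$.
   Context: $A_k$, $D_k$ denote the negative-definite root lattices of the corresponding Dynkin types. An embedding is primitive if the quotient is torsion-free. The Weyl group $W(D_8)$ is generated by the reflections $x\mapsto x+(a\cdot x)a$ in roots $a$ ($a\cdot a=-2$) of $D_8$. *)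

theory Defs
  imports Main
begin

text \<open>Vectors of Z^8 are modelled as functions nat => int supported on {1..8};
  eps i is the standard basis vector.  The lattice D8 is the set of even-sum
  vectors, carrying the NEGATIVE definite form (so D8(-1) is the same set with the
  standard dot product).\<close>

definition eps :: "nat \<Rightarrow> nat \<Rightarrow> int" where
  "eps i = (\<lambda>j. if j = i then 1 else 0)"

definition vadd :: "(nat \<Rightarrow> int) \<Rightarrow> (nat \<Rightarrow> int) \<Rightarrow> nat \<Rightarrow> int" where
  "vadd x y = (\<lambda>j. x j + y j)"

definition vsmult :: "int \<Rightarrow> (nat \<Rightarrow> int) \<Rightarrow> nat \<Rightarrow> int" where
  "vsmult c x = (\<lambda>j. c * x j)"

definition D8 :: "(nat \<Rightarrow> int) set" where
  "D8 = {v. (\<forall>i. i \<notin> {1..8} \<longrightarrow> v i = 0) \<and> even (\<Sum>i=1..8. v i)}"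

definition formD8 :: "(nat \<Rightarrow> int) \<Rightarrow> (nat \<Rightarrow> int) \<Rightarrow> int" where
  "formD8 x y = - (\<Sum>i=1..8. x i * y i)"

definition rootsD8 :: "(nat \<Rightarrow> int) set" where
  "rootsD8 = {a \<in> D8. formD8 a a = -2}"

definition refl :: "(nat \<Rightarrow> int) \<Rightarrow> (nat \<Rightarrow> int) \<Rightarrow> nat \<Rightarrow> int" where
  "refl a x = vadd x (vsmult (formD8 a x) a)"

text \<open>Weyl group: all finite composites of reflections in roots (reflections are
  involutions, so this is the group they generate).\<close>
inductive_set WeylD8 :: "((nat \<Rightarrow> int) \<Rightarrow> (nat \<Rightarrow> int)) set" where
  id_in: "id \<in> WeylD8"
| step: "a \<in> rootsD8 \<Longrightarrow> w \<in> WeylD8 \<Longrightarrow> refl a \<circ> w \<in> WeylD8"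

text \<open>Primitive sublattice: D8 / L torsion free.\<close>
definition primitive_sub :: "(nat \<Rightarrow> int) set \<Rightarrow> bool" where
  "primitive_sub L \<longleftrightarrow> L \<subseteq> D8 \<and>
     (\<forall>v \<in> D8. \<forall>n::int. n \<noteq> 0 \<and> vsmult n v \<in> L \<longrightarrow> v \<in> L)"

definition zspan :: "(nat \<Rightarrow> int) list \<Rightarrow> (nat \<Rightarrow> int) set" where
  "zspan bs = {v. \<exists>c :: nat \<Rightarrow> int. v = (\<lambda>j. \<Sum>k<length bs. c k * (bs ! k) j)}"

text \<open>The abstract lattice A5 + A1: Z^6 (functions supported on {0..5}) with form
  minus the Cartan matrix of A5 (indices 0..4) + A1 (index 5).\<close>
definition cartanA5A1 :: "nat \<Rightarrow> nat \<Rightarrow> int" where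
  "cartanA5A1 i j =
     (if i = j then 2
      else if i < 5 \<and> j < 5 \<and> (i = j + 1 \<or> j = i + 1) then -1
      else 0)"

definition latA5A1 :: "(nat \<Rightarrow> int) set" where
  "latA5A1 = {x. \<forall>i \<ge> 6. x i = 0}"

definition formA5A1 :: "(nat \<Rightarrow> int) \<Rightarrow> (nat \<Rightarrow> int) \<Rightarrow> int" where
  "formA5A1 x y = - (\<Sum>i<6. \<Sum>j<6. x i * cartanA5A1 i j * y j)"

definition embedding_A5A1_D8 :: "((nat \<Rightarrow> int) \<Rightarrow> (nat \<Rightarrow> int)) \<Rightarrow> bool" where
  "embedding_A5A1_D8 f \<longleftrightarrow>
     f ` latA5A1 \<subseteq> D8 \<and> inj_on f latA5A1 \<and>
     (\<forall>x \<in> latA5A1. \<forall>y \<in> latA5A1. f (vadd x y) = vadd (f x) (f y)) \<and>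
     (\<forall>c. \<forall>x \<in> latA5A1. f (vsmult c x) = vsmult c (f x)) \<and>
     (\<forall>x \<in> latA5A1. \<forall>y \<in> latA5A1. formD8 (f x) (f y) = formA5A1 x y)"

definition dD8 :: "nat \<Rightarrow> nat \<Rightarrow> int" where
  "dD8 k = (if k = 8 then vadd (eps 1) (eps 2)
            else vadd (vsmult (-1) (eps (8 - k))) (eps (9 - k)))"

end

theory Submission
  imports Defs
begin

text \<open>Both images are \<open>{v. v\<^sub>1 + \<dots> + v\<^sub>6 = 0 \<and> v\<^sub>7 = s v\<^sub>8}\<close> for \<open>s = \<plusminus>1\<close>, which are
  primitive. A reflection in a root \<open>\<plusminus>\<epsilon>\<^sub>p \<plusminus> \<epsilon>\<^sub>q\<close> either fixes a vector with all
  coordinates \<open>\<plusminus>1\<close> or negates two of its coordinates, so \<open>W(D\<^sub>8)\<close> preserves such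
  vectors together with the product of their coordinates. On the image for \<open>s\<close>
  every such vector has coordinate product \<open>-s\<close>: the first six coordinates sum
  to zero, hence three are \<open>-1\<close>.\<close>

text \<open>The simple roots \<open>\<alpha>\<^sub>0, \<dots>, \<alpha>\<^sub>4\<close> of \<open>A\<^sub>5\<close> go to \<open>d\<^sub>7, \<dots>, d\<^sub>3\<close> and the root
  \<open>\<alpha>\<^sub>5\<close> of \<open>A\<^sub>1\<close> to \<open>s \<epsilon>\<^sub>7 + \<epsilon>\<^sub>8\<close>, which is \<open>d\<^sub>1\<close> for \<open>s = -1\<close>.\<close>

definition A5A1_embedding :: "int \<Rightarrow> (nat \<Rightarrow> int) \<Rightarrow> nat \<Rightarrow> int" where
  "A5A1_embedding s x = (\<lambda>j.
     if j = 1 then - x 0 else if j = 2 then x 0 - x 1 else if j = 3 then x 1 - x 2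
     else if j = 4 then x 2 - x 3 else if j = 5 then x 3 - x 4 else if j = 6 then x 4
     else if j = 7 then s * x 5 else if j = 8 then x 5 else 0)"

definition A5A1_sublattice :: "int \<Rightarrow> (nat \<Rightarrow> int) set" where
  "A5A1_sublattice s = {v. (\<forall>i. i \<notin> {1..8} \<longrightarrow> v i = 0) \<and>
     v 1 + v 2 + v 3 + v 4 + v 5 + v 6 = 0 \<and> v 7 = s * v 8}"

lemma lessThan_6_eq: "{..<6::nat} = {0, 1, 2, 3, 4, 5}"
  by auto

lemma atLeastAtMost_1_8_eq: "{1..8::nat} = {1, 2, 3, 4, 5, 6, 7, 8}"
  by auto

lemma zspan_eq_range_A5A1_embedding:
  assumes "b = (\<lambda>j. if j = 7 then s else if j = 8 then 1 else 0)"
  shows "zspan [dD8 7, dD8 6, dD8 5, dD8 4, dD8 3, b] = range (A5A1_embedding s)"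
proof -
  have "(\<lambda>j. \<Sum>k<length [dD8 7, dD8 6, dD8 5, dD8 4, dD8 3, b].
          c k * ([dD8 7, dD8 6, dD8 5, dD8 4, dD8 3, b] ! k) j) = A5A1_embedding s c" for c
    unfolding assms
    by (intro ext) (simp add: lessThan_6_eq A5A1_embedding_def dD8_def eps_def vadd_def
        vsmult_def numeral_eq_Suc)
  then show ?thesis
    unfolding zspan_def by auto
qed

lemma range_A5A1_embedding: "range (A5A1_embedding s) = A5A1_embedding s ` latA5A1"
proof -
  have "A5A1_embedding s c = A5A1_embedding s (\<lambda>k. if k < 6 then c k else 0)" for c
    by (simp add: A5A1_embedding_def)
  moreover have "(\<lambda>k. if k < 6 then c k else 0) \<in> latA5A1" for c :: "nat \<Rightarrow> int"
    by (simp add: latA5A1_def)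
  ultimately show ?thesis
    by blast
qed

lemma image_A5A1_embedding: "A5A1_embedding s ` latA5A1 = A5A1_sublattice s"
proof
  show "A5A1_embedding s ` latA5A1 \<subseteq> A5A1_sublattice s"
    by (auto simp: A5A1_sublattice_def A5A1_embedding_def)
next
  show "A5A1_sublattice s \<subseteq> A5A1_embedding s ` latA5A1"
  proof
    fix v assume v: "v \<in> A5A1_sublattice s"
    define x where "x = (\<lambda>k::nat. if k = 0 then - v 1 else if k = 1 then - v 1 - v 2
       else if k = 2 then - v 1 - v 2 - v 3 else if k = 3 then - v 1 - v 2 - v 3 - v 4
       else if k = 4 then v 6 else if k = 5 then v 8 else 0)"
    have "x \<in> latA5A1"
      by (simp add: x_def latA5A1_def)
    moreover have "A5A1_embedding s x = v"
    proof
      fix j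
      have v6: "v 6 = - v 1 - v 2 - v 3 - v 4 - v 5"
        using v by (simp add: A5A1_sublattice_def)
      show "A5A1_embedding s x j = v j"
      proof (cases "j \<in> {1..8}")
        case True
        then show ?thesis
          using v v6 unfolding atLeastAtMost_1_8_eq
          by (auto simp: A5A1_sublattice_def A5A1_embedding_def x_def)
      qed (use v in \<open>auto simp: A5A1_sublattice_def A5A1_embedding_def x_def\<close>)
    qed
    ultimately show "v \<in> A5A1_embedding s ` latA5A1"
      by blast
  qed
qed

lemma A5A1_sublattice_subset_D8:
  assumes "s = 1 \<or> s = -1"
  shows "A5A1_sublattice s \<subseteq> D8"
proof
  fix v assume v: "v \<in> A5A1_sublattice s"
  have "(\<Sum>i=1..8. v i) = (v 1 + v 2 + v 3 + v 4 + v 5 + v 6) + v 7 + v 8"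
    unfolding atLeastAtMost_1_8_eq by (simp add: algebra_simps)
  also have "\<dots> = (s + 1) * v 8"
    using v by (simp add: A5A1_sublattice_def algebra_simps)
  finally show "v \<in> D8"
    using v assms by (auto simp: D8_def A5A1_sublattice_def)
qed

lemma primitive_A5A1_sublattice:
  assumes "s = 1 \<or> s = -1"
  shows "primitive_sub (A5A1_sublattice s)"
  unfolding primitive_sub_def
proof (intro conjI ballI allI impI)
  show "A5A1_sublattice s \<subseteq> D8"
    using A5A1_sublattice_subset_D8[OF assms] .
  fix v n assume v: "v \<in> D8" and nv: "n \<noteq> 0 \<and> vsmult n v \<in> A5A1_sublattice s"
  then have "n * (v 1 + v 2 + v 3 + v 4 + v 5 + v 6) = 0" "n * v 7 = n * (s * v 8)"
    by (auto simp: A5A1_sublattice_def vsmult_def algebra_simps)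
  then show "v \<in> A5A1_sublattice s"
    using nv v unfolding A5A1_sublattice_def D8_def by auto
qed

lemma embedding_A5A1_embedding:
  assumes "s = 1 \<or> s = -1"
  shows "embedding_A5A1_D8 (A5A1_embedding s)"
  unfolding embedding_A5A1_D8_def
proof (intro conjI ballI allI)
  show "A5A1_embedding s ` latA5A1 \<subseteq> D8"
    using image_A5A1_embedding A5A1_sublattice_subset_D8[OF assms] by simp
  show "inj_on (A5A1_embedding s) latA5A1"
  proof
    fix x y assume x: "x \<in> latA5A1" and y: "y \<in> latA5A1"
      and eq: "A5A1_embedding s x = A5A1_embedding s y"
    have eq_at: "A5A1_embedding s x j = A5A1_embedding s y j" for j
      using eq by simp
    have "x 0 = y 0"
      using eq_at[of 1] by (simp add: A5A1_embedding_def)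
    moreover have "x 1 = y 1"
      using eq_at[of 2] \<open>x 0 = y 0\<close> by (simp add: A5A1_embedding_def)
    moreover have "x 2 = y 2"
      using eq_at[of 3] \<open>x 1 = y 1\<close> by (simp add: A5A1_embedding_def)
    moreover have "x 3 = y 3"
      using eq_at[of 4] \<open>x 2 = y 2\<close> by (simp add: A5A1_embedding_def)
    moreover have "x 4 = y 4"
      using eq_at[of 6] by (simp add: A5A1_embedding_def)
    moreover have "x 5 = y 5"
      using eq_at[of 8] by (simp add: A5A1_embedding_def)
    moreover have "x k = 0" "y k = 0" if "k \<ge> 6" for k
      using x y that by (simp_all add: latA5A1_def)
    ultimately have "x k = y k" for k
      by (cases "k \<ge> 6") (auto simp: not_le less_Suc_eq numeral_eq_Suc)
    then show "x = y" ..
  qed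
  fix x y
  show "A5A1_embedding s (vadd x y) = vadd (A5A1_embedding s x) (A5A1_embedding s y)"
    by (rule ext) (simp add: A5A1_embedding_def vadd_def algebra_simps)
  fix c
  show "A5A1_embedding s (vsmult c x) = vsmult c (A5A1_embedding s x)"
    by (rule ext) (simp add: A5A1_embedding_def vsmult_def algebra_simps)
next
  fix x y
  have "s * s = 1"
    using assms by auto
  have "formD8 (A5A1_embedding s x) (A5A1_embedding s y)
      = - ((- x 0) * (- y 0) + (x 0 - x 1) * (y 0 - y 1) + (x 1 - x 2) * (y 1 - y 2)
          + (x 2 - x 3) * (y 2 - y 3) + (x 3 - x 4) * (y 3 - y 4) + x 4 * y 4
          + (s * s) * (x 5 * y 5) + x 5 * y 5)"
    unfolding formD8_def atLeastAtMost_1_8_eq by (simp add: A5A1_embedding_def algebra_simps)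
  also have "\<dots> = formA5A1 x y"
    by (simp add: formA5A1_def lessThan_6_eq cartanA5A1_def \<open>s * s = 1\<close> algebra_simps)
  finally show "formD8 (A5A1_embedding s x) (A5A1_embedding s y) = formA5A1 x y" .
qed

definition sign_vector :: "(nat \<Rightarrow> int) \<Rightarrow> bool" where
  "sign_vector u \<longleftrightarrow> (\<forall>i\<in>{1..8}. \<bar>u i\<bar> = 1) \<and> (\<forall>i. i \<notin> {1..8} \<longrightarrow> u i = 0)"

definition coord_prod :: "(nat \<Rightarrow> int) \<Rightarrow> int" where
  "coord_prod u = (\<Prod>i=1..8. u i)"

lemma abs_eq_1_cases: "\<bar>x :: int\<bar> = 1 \<Longrightarrow> x = 1 \<or> x = -1"
  by arith

lemma abs_le_1_if_square_le_2:
  fixes x :: int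
  assumes "x * x \<le> 2"
  shows "\<bar>x\<bar> \<le> 1"
proof (rule ccontr)
  assume "\<not> \<bar>x\<bar> \<le> 1"
  then have "2 * 2 \<le> \<bar>x\<bar> * \<bar>x\<bar>"
    by (intro mult_mono) auto
  then show False
    using assms by (simp add: abs_mult_self_eq)
qed

lemma rootsD8_shape:
  assumes "a \<in> rootsD8"
  obtains p q where "p \<noteq> q" "p \<in> {1..8}" "q \<in> {1..8}" "\<bar>a p\<bar> = 1" "\<bar>a q\<bar> = 1"
    "\<And>k. k \<noteq> p \<Longrightarrow> k \<noteq> q \<Longrightarrow> a k = 0"
proof -
  have supp: "a i = 0" if "i \<notin> {1..8}" for i
    using assms that by (auto simp: rootsD8_def D8_def)
  have norm: "(\<Sum>i\<in>{1..8}. a i * a i) = 2"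
    using assms by (simp add: rootsD8_def formD8_def)
  have bound: "\<bar>a i\<bar> \<le> 1" for i
  proof (cases "i \<in> {1..8}")
    case True
    then have "a i * a i \<le> (\<Sum>i\<in>{1..8}. a i * a i)"
      by (intro member_le_sum) auto
    then show ?thesis
      using norm abs_le_1_if_square_le_2 by simp
  qed (simp add: supp)
  have unit: "\<bar>a i\<bar> = 1" if "a i \<noteq> 0" for i
    using bound[of i] that by arith
  have unit_square: "a i * a i = 1" if "a i \<noteq> 0" for i
    using unit[OF that] by (metis abs_mult_self_eq mult_1)
  define S where "S = {i\<in>{1..8}. a i \<noteq> 0}"
  have "(\<Sum>i\<in>{1..8}. a i * a i) = (\<Sum>i\<in>S. a i * a i)"
    by (rule sum.mono_neutral_right) (auto simp: S_def)
  also have "\<dots> = int (card S)"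
    by (simp add: S_def unit_square)
  finally have "card S = 2"
    using norm by simp
  then obtain p q where pq: "p \<noteq> q" "S = {p, q}"
    by (auto simp: card_2_iff)
  then have "p \<in> S" "q \<in> S"
    by auto
  moreover have "a k = 0" if "k \<noteq> p" "k \<noteq> q" for k
    using that pq supp[of k] by (auto simp: S_def)
  ultimately show thesis
    using that[of p q] pq(1) unit by (simp add: S_def)
qed

lemma prod_negate_two:
  fixes u :: "'a \<Rightarrow> 'b::comm_ring_1"
  assumes "finite T" "p \<noteq> q" "p \<in> T" "q \<in> T"
  shows "(\<Prod>k\<in>T. if k = p \<or> k = q then - u k else u k) = (\<Prod>k\<in>T. u k)"
proof -
  have split: "prod g T = prod g (T - {p, q}) * (g p * g q)" for g :: "'a \<Rightarrow> 'b"
    using assms by (simp add: prod.subset_diff[of "{p, q}" T])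
  have "(\<Prod>k\<in>T - {p, q}. if k = p \<or> k = q then - u k else u k) = (\<Prod>k\<in>T - {p, q}. u k)"
    by (rule prod.cong) auto
  then show ?thesis
    using assms(2) by (simp add: split[of "\<lambda>k. if k = p \<or> k = q then - u k else u k"] split[of u])
qed

lemma refl_sign_vector:
  assumes "a \<in> rootsD8" "sign_vector u"
  shows "sign_vector (refl a u) \<and> coord_prod (refl a u) = coord_prod u"
proof -
  obtain p q where pq: "p \<noteq> q" "p \<in> {1..8}" "q \<in> {1..8}" "\<bar>a p\<bar> = 1" "\<bar>a q\<bar> = 1"
    and zero: "\<And>k. k \<noteq> p \<Longrightarrow> k \<noteq> q \<Longrightarrow> a k = 0"
    using rootsD8_shape[OF assms(1)] by blast
  have u: "\<bar>u p\<bar> = 1" "\<bar>u q\<bar> = 1"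
    using assms(2) pq by (auto simp: sign_vector_def)
  define m where "m = (\<Sum>i\<in>{1..8}. a i * u i)"
  have "m = (\<Sum>i\<in>{p, q}. a i * u i)"
    unfolding m_def using pq zero by (intro sum.mono_neutral_right) auto
  then have m: "m = a p * u p + a q * u q"
    using pq by simp
  have refl_eq: "refl a u k = u k - m * a k" for k
    by (simp add: refl_def vadd_def vsmult_def formD8_def m_def)
  show ?thesis
  proof (cases "m = 0")
    case True
    then have "refl a u = u"
      by (intro ext) (simp add: refl_eq)
    then show ?thesis
      using assms(2) by simp
  next
    case False
    then have "m * a p = 2 * u p" "m * a q = 2 * u q"
      using m abs_eq_1_cases[OF pq(4)] abs_eq_1_cases[OF pq(5)]
        abs_eq_1_cases[OF u(1)] abs_eq_1_cases[OF u(2)]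
      by auto
    then have flip: "refl a u = (\<lambda>k. if k = p \<or> k = q then - u k else u k)"
      using zero by (auto simp: refl_eq fun_eq_iff)
    have "sign_vector (refl a u)"
      using assms(2) unfolding flip sign_vector_def by auto
    moreover have "coord_prod (refl a u) = coord_prod u"
      unfolding flip coord_prod_def by (rule prod_negate_two) (use pq in auto)
    ultimately show ?thesis
      by blast
  qed
qed

lemma WeylD8_sign_vector:
  assumes "w \<in> WeylD8" "sign_vector u"
  shows "sign_vector (w u) \<and> coord_prod (w u) = coord_prod u"
  using assms
proof (induction arbitrary: u)
  case (step a w)
  then show ?case
    using refl_sign_vector[OF step.hyps(1)] by auto
qed simp

lemma coord_prod_in_A5A1_sublattice:
  assumes "v \<in> A5A1_sublattice s" "sign_vector v"
  shows "coord_prod v = - s"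
proof -
  have sum: "v 1 + v 2 + v 3 + v 4 + v 5 + v 6 = 0" and last: "v 7 = s * v 8"
    using assms(1) by (auto simp: A5A1_sublattice_def)
  have pm: "v i = 1 \<or> v i = -1" if "i \<in> {1..8}" for i
    using assms(2) that by (simp add: sign_vector_def abs_eq_1_cases)
  have "coord_prod v = (v 1 * v 2 * v 3 * v 4 * v 5 * v 6) * (v 7 * v 8)"
    unfolding coord_prod_def atLeastAtMost_1_8_eq by (simp add: algebra_simps)
  also have "v 7 * v 8 = s"
    using last pm[of 8] by auto
  also have "v 1 * v 2 * v 3 * v 4 * v 5 * v 6 = -1"
    using sum pm[of 1] pm[of 2] pm[of 3] pm[of 4] pm[of 5] pm[of 6] by auto
  finally show ?thesis
    by simp
qed

lemma not_Weyl_equivalent_A5A1_sublattices: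
  "\<not> (\<exists>w \<in> WeylD8. w ` A5A1_sublattice 1 = A5A1_sublattice (-1))"
proof
  assume "\<exists>w \<in> WeylD8. w ` A5A1_sublattice 1 = A5A1_sublattice (-1)"
  then obtain w where w: "w \<in> WeylD8" "w ` A5A1_sublattice 1 = A5A1_sublattice (-1)"
    by blast
  define u :: "nat \<Rightarrow> int" where
    "u = (\<lambda>i. if i \<in> {1, 2, 3, 7, 8} then 1 else if i \<in> {4, 5, 6} then -1 else 0)"
  have u: "u \<in> A5A1_sublattice 1" "sign_vector u"
    by (auto simp: A5A1_sublattice_def sign_vector_def atLeastAtMost_1_8_eq u_def)
  then have "w u \<in> A5A1_sublattice (-1)" "sign_vector (w u)" "coord_prod (w u) = -1"
    using w WeylD8_sign_vector[OF w(1) u(2)] coord_prod_in_A5A1_sublattice[OF u] by auto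
  then show False
    using coord_prod_in_A5A1_sublattice by fastforce
qed

theorem mainTheorem5:
  shows "\<exists>f1 f2. embedding_A5A1_D8 f1 \<and> embedding_A5A1_D8 f2 \<and>
     f1 ` latA5A1 = zspan [dD8 7, dD8 6, dD8 5, dD8 4, dD8 3, vadd (eps 7) (eps 8)] \<and>
     f2 ` latA5A1 = zspan [dD8 7, dD8 6, dD8 5, dD8 4, dD8 3, dD8 1] \<and>
     primitive_sub (f1 ` latA5A1) \<and> primitive_sub (f2 ` latA5A1) \<and>
     \<not> (\<exists>w \<in> WeylD8. w ` (f1 ` latA5A1) = f2 ` latA5A1)"
proof (intro exI conjI)
  show "embedding_A5A1_D8 (A5A1_embedding 1)" "embedding_A5A1_D8 (A5A1_embedding (-1))"
    by (simp_all add: embedding_A5A1_embedding)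
  show "A5A1_embedding 1 ` latA5A1
      = zspan [dD8 7, dD8 6, dD8 5, dD8 4, dD8 3, vadd (eps 7) (eps 8)]"
    by (subst zspan_eq_range_A5A1_embedding) (auto simp: range_A5A1_embedding vadd_def eps_def)
  show "A5A1_embedding (-1) ` latA5A1 = zspan [dD8 7, dD8 6, dD8 5, dD8 4, dD8 3, dD8 1]"
    by (subst zspan_eq_range_A5A1_embedding)
      (auto simp: range_A5A1_embedding dD8_def vadd_def vsmult_def eps_def)
  show "primitive_sub (A5A1_embedding 1 ` latA5A1)"
    "primitive_sub (A5A1_embedding (-1) ` latA5A1)"
    by (simp_all add: image_A5A1_embedding primitive_A5A1_sublattice)
  show "\<not> (\<exists>w \<in> WeylD8. w ` (A5A1_embedding 1 ` latA5A1) = A5A1_embedding (-1) ` latA5A1)"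
    unfolding image_A5A1_embedding by (rule not_Weyl_equivalent_A5A1_sublattices)
qed

end
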